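(* Let $1\le n\le d$ and let $P_1,\dots,P_n$ be real quadratic forms on $\mathbb{R}^d$ such that for every choice of linearly independent $\vec w_1,\dots,\vec w_{d-n}\in\mathbb{R}^d$, $\det[\nabla P_1(t);\dots;\nabla P_n(t);\vec w_1;\dots;\vec w_{d-n}]\not\equiv0$ as a polynomial in $t$. Let $V\subset\mathbb{R}^{d+n}$ be a linear subspace and let integers $H_1,H_2$ satisfy $0\le H_1\le\min(\dim(V\cap S_1),d-n)$ and $0\le H_2\le\dim(V/S_1)$. Then $\dim(\pi_t(V))\ge H_1+H_2$ for all $t\in\mathbb{R}^d$ outside the zero set of some nontrivial polynomial of degree at most $H_2$.
   Context: $S_1=\mathbb{R}^d\times\{0\}\subset\mathbb{R}^{d+n}$, and $\dim(V/S_1)=\dim V-\dim(V\cap S_1)$. For $t\in\mathbb{R}^d$, $V(t)\subset\mathbb{R}^{d+n}$ is the linear subspace spanned by $(e_j,\partial_jP_1(t),\dots,\partial_jP_n(t))$, $j=1,\dots,d$ (tangent space of the graph of $(P_1,\dots,P_n)$), and $\pi_t$ is the orthogonal projection onto $V(t)$. *)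

theory Defs
  imports "HOL-Analysis.Analysis"
begin

definition qform :: "real^'d^'d \<Rightarrow> real^'d \<Rightarrow> real" where
  "qform A t = t \<bullet> (A *v t)"

definition gradient :: "(real^'d \<Rightarrow> real) \<Rightarrow> real^'d \<Rightarrow> real^'d" where
  "gradient f t = (\<chi> j. frechet_derivative f (at t) (axis j 1))"

definition enum_idx :: "'a::finite \<Rightarrow> nat" where
  "enum_idx = (SOME f. bij_betw f UNIV {..<CARD('a)})"

definition stack_rows :: "(real^'d) list \<Rightarrow> real^'d^'d" where
  "stack_rows rs = (\<chi> i. rs ! enum_idx i)"

definition grad_list :: "('n::finite \<Rightarrow> real^'d^'d) \<Rightarrow> real^'d \<Rightarrow> (real^'d) list" where
  "grad_list P t = map (\<lambda>k. gradient (qform (P (inv enum_idx k))) t) [0..<CARD('n)]"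

definition S1 :: "((real^'d) \<times> (real^'n)) set" where
  "S1 = {(x, 0) | x. True}"

text \<open>Tangent space V(t) of the graph of (P_1,...,P_n).\<close>
definition tangent_space :: "('n \<Rightarrow> real^'d^'d) \<Rightarrow> real^'d \<Rightarrow> ((real^'d) \<times> (real^'n)) set" where
  "tangent_space P t =
     span {(axis j 1, \<chi> k. gradient (qform (P k)) t $ j) | j. True}"

definition orth_proj :: "'a::euclidean_space set \<Rightarrow> 'a \<Rightarrow> 'a" where
  "orth_proj W x = (THE p. p \<in> W \<and> (\<forall>w\<in>W. (x - p) \<bullet> w = 0))"

definition monomials_upto :: "nat \<Rightarrow> ('d::finite \<Rightarrow> nat) set" where
  "monomials_upto k = {\<alpha>. (\<Sum>i\<in>UNIV. \<alpha> i) \<le> k}"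

definition poly_eval :: "nat \<Rightarrow> (('d::finite \<Rightarrow> nat) \<Rightarrow> real) \<Rightarrow> real^'d \<Rightarrow> real" where
  "poly_eval k c t = (\<Sum>\<alpha>\<in>monomials_upto k. c \<alpha> * (\<Prod>i\<in>UNIV. (t $ i) ^ \<alpha> i))"

end

theory Submission
  imports Defs
begin

text \<open>The kernel of \<open>\<pi>\<^sub>t\<close> is \<open>V(t)\<^sup>\<bottom>\<close>, which is also the kernel of the map
  \<open>(x, z) \<mapsto> x + J(t)\<^sup>T z\<close>, \<open>J(t)\<close> the Jacobian of \<open>(P\<^sub>1, \<dots>, P\<^sub>n)\<close>; so it suffices to find
  \<open>H\<^sub>1 + H\<^sub>2\<close> vectors of \<open>V\<close> whose images under this map are independent.  Take
  \<open>(e\<^sub>i, 0) \<in> V \<inter> S\<^sub>1\<close> with independent \<open>e\<^sub>i\<close> (\<open>i \<le> H\<^sub>1\<close>) and \<open>(x\<^sub>j, z\<^sub>j) \<in> V\<close> with independent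
  \<open>z\<^sub>j\<close> (\<open>j \<le> H\<^sub>2\<close>).  Extending the \<open>e\<^sub>i\<close> to \<open>d - n\<close> independent vectors, the nondegeneracy
  hypothesis gives \<open>t\<^sub>1\<close> at which the gradients and the \<open>e\<^sub>i\<close> are independent, hence so are the
  \<open>e\<^sub>i\<close> and the \<open>J(t\<^sub>1)\<^sup>T z\<^sub>j\<close>.  As the \<open>P\<^sub>k\<close> are quadratic, \<open>J\<close> is linear, and at
  \<open>t = t\<^sub>1 / \<mu>\<close> the images are \<open>e\<^sub>i\<close> and \<open>\<mu>\<^sup>-\<^sup>1 (J(t\<^sub>1)\<^sup>T z\<^sub>j + \<mu> x\<^sub>j)\<close>, independent for small
  \<open>\<mu> \<noteq> 0\<close>.  Finally the Gram determinant of the images at \<open>t\<close> against those at this point is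
  a polynomial in \<open>t\<close> of degree at most \<open>H\<^sub>2\<close> (only \<open>H\<^sub>2\<close> columns depend on \<open>t\<close>, affinely),
  it is not identically zero, and the images stay independent wherever it does not vanish.\<close>

section \<open>Polynomial functions of bounded degree\<close>

definition poly_upto :: "nat \<Rightarrow> (real^'d::finite \<Rightarrow> real) \<Rightarrow> bool" where
  "poly_upto k f \<longleftrightarrow> (\<exists>c. f = poly_eval k c)"

definition monomial_fun :: "('d::finite \<Rightarrow> nat) \<Rightarrow> real^'d \<Rightarrow> real" where
  "monomial_fun \<alpha> t = (\<Prod>i\<in>UNIV. (t $ i) ^ \<alpha> i)"

lemma finite_monomials_upto: "finite (monomials_upto k :: ('d::finite \<Rightarrow> nat) set)"
proof -
  have "monomials_upto k \<subseteq> PiE (UNIV::'d set) (\<lambda>_. {..k})"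
  proof
    fix \<alpha> :: "'d \<Rightarrow> nat" assume "\<alpha> \<in> monomials_upto k"
    then have "\<alpha> i \<le> k" for i
      using member_le_sum[of i UNIV \<alpha>] by (simp add: monomials_upto_def)
    then show "\<alpha> \<in> PiE UNIV (\<lambda>_. {..k})" by auto
  qed
  then show ?thesis by (rule finite_subset) (auto intro: finite_PiE)
qed

lemma poly_eval_eq_sum_monomial_fun:
  "poly_eval k c = (\<lambda>t. \<Sum>\<alpha>\<in>monomials_upto k. c \<alpha> * monomial_fun \<alpha> t)"
  by (simp add: poly_eval_def monomial_fun_def fun_eq_iff)

lemma poly_upto_add: "poly_upto k f \<Longrightarrow> poly_upto k g \<Longrightarrow> poly_upto k (\<lambda>t. f t + g t)"
proof -
  assume "poly_upto k f" "poly_upto k g"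
  then obtain c e where "f = poly_eval k c" "g = poly_eval k e" by (auto simp: poly_upto_def)
  then have "(\<lambda>t. f t + g t) = poly_eval k (\<lambda>\<alpha>. c \<alpha> + e \<alpha>)"
    by (simp add: poly_eval_def fun_eq_iff distrib_right sum.distrib)
  then show ?thesis by (auto simp: poly_upto_def)
qed

lemma poly_upto_scale: "poly_upto k f \<Longrightarrow> poly_upto k (\<lambda>t. a * f t)"
proof -
  assume "poly_upto k f"
  then obtain c where "f = poly_eval k c" by (auto simp: poly_upto_def)
  then have "(\<lambda>t. a * f t) = poly_eval k (\<lambda>\<alpha>. a * c \<alpha>)"
    by (simp add: poly_eval_def fun_eq_iff sum_distrib_left mult.assoc)
  then show ?thesis by (auto simp: poly_upto_def)
qed

lemma poly_upto_monomial_fun: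
  assumes "\<alpha> \<in> monomials_upto k"
  shows "poly_upto k (monomial_fun \<alpha>)"
proof -
  have "monomial_fun \<alpha> = poly_eval k (\<lambda>\<beta>. if \<beta> = \<alpha> then 1 else 0)"
    unfolding poly_eval_eq_sum_monomial_fun
    using assms by (intro ext) (simp add: finite_monomials_upto if_distrib[of "\<lambda>x. x * _"] cong: if_cong)
  then show ?thesis by (auto simp: poly_upto_def)
qed

lemma poly_upto_const: "poly_upto k (\<lambda>t::real^'d::finite. a)"
proof -
  have "(\<lambda>_. 0) \<in> (monomials_upto k :: ('d \<Rightarrow> nat) set)"
    by (simp add: monomials_upto_def)
  then have "poly_upto k (\<lambda>t::real^'d. a * monomial_fun (\<lambda>_. 0) t)"
    by (intro poly_upto_scale poly_upto_monomial_fun)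
  then show ?thesis by (simp add: monomial_fun_def)
qed

lemma poly_upto_sum:
  "finite A \<Longrightarrow> (\<And>x. x \<in> A \<Longrightarrow> poly_upto k (f x)) \<Longrightarrow> poly_upto k (\<lambda>t. \<Sum>x\<in>A. f x t)"
  by (induction A rule: finite_induct) (auto intro: poly_upto_add poly_upto_const)

lemma poly_upto_mult:
  fixes f g :: "real^'d::finite \<Rightarrow> real"
  assumes "poly_upto k f" "poly_upto l g"
  shows "poly_upto (k + l) (\<lambda>t. f t * g t)"
proof -
  obtain c e where f: "f = poly_eval k c" and g: "g = poly_eval l e"
    using assms by (auto simp: poly_upto_def)
  have monomial_fun_add:
    "monomial_fun (\<lambda>i. \<alpha> i + \<beta> i) t = monomial_fun \<alpha> t * monomial_fun \<beta> t" for \<alpha> \<beta> :: "'d \<Rightarrow> nat" and t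
    by (simp add: monomial_fun_def power_add prod.distrib)
  have eq: "(\<lambda>t. f t * g t) = (\<lambda>t. \<Sum>\<alpha>\<in>monomials_upto k. \<Sum>\<beta>\<in>monomials_upto l.
          (c \<alpha> * e \<beta>) * monomial_fun (\<lambda>i. \<alpha> i + \<beta> i) t)"
    unfolding f g poly_eval_eq_sum_monomial_fun
    by (simp add: fun_eq_iff sum_product monomial_fun_add ac_simps)
  have "\<alpha> \<in> monomials_upto k \<Longrightarrow> \<beta> \<in> monomials_upto l \<Longrightarrow>
      (\<lambda>i. \<alpha> i + \<beta> i) \<in> monomials_upto (k + l)" for \<alpha> \<beta> :: "'d \<Rightarrow> nat"
    by (simp add: monomials_upto_def sum.distrib)
  then show ?thesis unfolding eq
    by (intro poly_upto_sum finite_monomials_upto poly_upto_scale poly_upto_monomial_fun)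
qed

lemma poly_upto_prod:
  "finite A \<Longrightarrow> (\<And>x. x \<in> A \<Longrightarrow> poly_upto (k x) (f x)) \<Longrightarrow>
   poly_upto (\<Sum>x\<in>A. k x) (\<lambda>t. \<Prod>x\<in>A. f x t)"
  by (induction A rule: finite_induct) (auto intro: poly_upto_mult poly_upto_const[of 0 1])

lemma poly_upto_linear: "linear (f :: real^'d::finite \<Rightarrow> real) \<Longrightarrow> poly_upto 1 f"
proof -
  assume "linear f"
  have coord: "poly_upto 1 (\<lambda>t::real^'d. t $ i)" for i
  proof -
    let ?\<alpha> = "\<lambda>j::'d. if j = i then 1 else 0"
    have "monomial_fun ?\<alpha> = (\<lambda>t. t $ i)"
      by (simp add: monomial_fun_def fun_eq_iff if_distrib cong: if_cong)
    moreover have "?\<alpha> \<in> monomials_upto 1" by (simp add: monomials_upto_def)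
    ultimately show ?thesis using poly_upto_monomial_fun by metis
  qed
  have "f t = (\<Sum>i\<in>UNIV. f (axis i 1) * t $ i)" for t
  proof -
    have "f t = f (\<Sum>i\<in>UNIV. t $ i *\<^sub>R axis i 1)"
      using basis_expansion[of t] by (simp add: scalar_mult_eq_scaleR)
    also have "\<dots> = (\<Sum>i\<in>UNIV. t $ i * f (axis i 1))"
      using \<open>linear f\<close> by (simp add: linear_sum linear_scale)
    finally show ?thesis by (simp add: ac_simps)
  qed
  then have eq: "f = (\<lambda>t. \<Sum>i\<in>UNIV. f (axis i 1) * t $ i)" by blast
  show ?thesis by (subst eq) (intro poly_upto_sum poly_upto_scale coord finite)
qed

section \<open>Linearly independent finite families\<close>

definition indep_fam :: "nat \<Rightarrow> (nat \<Rightarrow> 'a::real_vector) \<Rightarrow> bool" where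
  "indep_fam m w \<longleftrightarrow> (\<forall>c. (\<Sum>j<m. c j *\<^sub>R w j) = 0 \<longrightarrow> (\<forall>j<m. c j = 0))"

lemma indep_famD: "indep_fam m w \<Longrightarrow> (\<Sum>j<m. c j *\<^sub>R w j) = 0 \<Longrightarrow> j < m \<Longrightarrow> c j = 0"
  unfolding indep_fam_def by blast

lemma indep_fam_cong: "(\<And>j. j < m \<Longrightarrow> v j = w j) \<Longrightarrow> indep_fam m v \<longleftrightarrow> indep_fam m w"
  unfolding indep_fam_def by (metis (no_types, lifting) lessThan_iff sum.cong)

lemma indep_fam_inj_on:
  assumes "indep_fam m w" shows "inj_on w {..<m}"
proof (rule inj_onI, rule ccontr)
  fix i j assume ij: "i \<in> {..<m}" "j \<in> {..<m}" "w i = w j" "i \<noteq> j"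
  let ?c = "\<lambda>k. if k = i then 1 else if k = j then -1 else (0::real)"
  have "(\<Sum>k<m. ?c k *\<^sub>R w k)
      = (\<Sum>k<m. (if k = i then w i else 0) - (if k = j then w j else 0))"
    by (rule sum.cong) (use ij in auto)
  also have "\<dots> = 0" using ij by (simp add: sum_subtractf)
  finally have "?c i = 0" using indep_famD[OF assms, of ?c i] ij by simp
  then show False by simp
qed

lemma indep_fam_independent:
  fixes w :: "nat \<Rightarrow> 'a::euclidean_space"
  assumes "indep_fam m w" shows "independent (w ` {..<m})"
proof
  assume "dependent (w ` {..<m})"
  then obtain u v where uv: "v \<in> w ` {..<m}" "u v \<noteq> 0" "(\<Sum>x\<in>w ` {..<m}. u x *\<^sub>R x) = 0"
    using dependent_finite[of "w ` {..<m}"] by auto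
  then obtain j where j: "j < m" "v = w j" by auto
  have "(\<Sum>j<m. u (w j) *\<^sub>R w j) = 0"
    using uv(3) by (simp add: sum.reindex[OF indep_fam_inj_on[OF assms]])
  then have "u (w j) = 0" using indep_famD[OF assms, of "\<lambda>k. u (w k)" j] j by simp
  with uv j show False by simp
qed

lemma indep_fam_le_dim:
  fixes w :: "nat \<Rightarrow> 'a::euclidean_space"
  assumes "indep_fam m w" "\<And>j. j < m \<Longrightarrow> w j \<in> S" shows "m \<le> dim S"
proof -
  have "card (w ` {..<m}) = m" using indep_fam_inj_on[OF assms(1)] by (simp add: card_image)
  moreover have "card (w ` {..<m}) \<le> dim S"
    by (rule independent_card_le_dim) (use assms indep_fam_independent in auto)
  ultimately show ?thesis by simp
qed

lemma obtain_indep_fam_in: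
  fixes S :: "'a::euclidean_space set"
  assumes "m \<le> dim S"
  obtains w where "\<And>j. j < m \<Longrightarrow> w j \<in> S" "indep_fam m w"
proof -
  obtain B where B: "B \<subseteq> S" "independent B" "card B = dim S" by (meson basis_exists)
  obtain C where C: "C \<subseteq> B" "card C = m" "finite C"
    using obtain_subset_with_card_n[of m B] B assms by auto
  obtain h where h: "bij_betw h {0..<m} C" using ex_bij_betw_nat_finite[OF C(3)] C(2) by auto
  have indC: "independent C" using B(2) C(1) by (rule independent_mono)
  have "indep_fam m h" unfolding indep_fam_def
  proof clarify
    fix c j assume s: "(\<Sum>j<m. c j *\<^sub>R h j) = 0" and j: "j < m"
    let ?u = "\<lambda>v. c (inv_into {0..<m} h v)"
    have "(\<Sum>v\<in>C. ?u v *\<^sub>R v) = (\<Sum>j\<in>{0..<m}. ?u (h j) *\<^sub>R h j)"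
      using h by (simp add: sum.reindex_bij_betw[symmetric])
    also have "\<dots> = (\<Sum>j<m. c j *\<^sub>R h j)"
      using h by (auto simp: bij_betw_def atLeast0LessThan intro!: sum.cong)
    finally have "(\<Sum>v\<in>C. ?u v *\<^sub>R v) = 0" using s by simp
    then have "?u (h j) = 0" using indC C(3) j h unfolding dependent_finite[OF C(3)]
      by (metis atLeastLessThan_iff bij_betwE zero_le)
    then show "c j = 0" using h j by (simp add: bij_betw_def)
  qed
  moreover have "h j \<in> S" if "j < m" for j
    using bij_betwE[OF h] that B(1) C(1) by fastforce
  ultimately show ?thesis using that by blast
qed

lemma indep_fam_scaleR:
  assumes "indep_fam m w" "\<And>j. j < m \<Longrightarrow> s j \<noteq> 0"
  shows "indep_fam m (\<lambda>j. s j *\<^sub>R w j)"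
  unfolding indep_fam_def
proof clarify
  fix c j assume "(\<Sum>j<m. c j *\<^sub>R s j *\<^sub>R w j) = 0" "j < m"
  then have "c j * s j = 0" using indep_famD[OF assms(1), of "\<lambda>j. c j * s j" j] by simp
  then show "c j = 0" using assms(2) \<open>j < m\<close> by simp
qed

lemma indep_fam_of_kernel_subset:
  assumes "linear f" "linear g" "\<And>v. f v = 0 \<Longrightarrow> g v = 0"
    and "indep_fam m (\<lambda>j. g (v j))"
  shows "indep_fam m (\<lambda>j. f (v j))"
  unfolding indep_fam_def
proof clarify
  fix c j assume "(\<Sum>j<m. c j *\<^sub>R f (v j)) = 0" and j: "j < m"
  then have "f (\<Sum>j<m. c j *\<^sub>R v j) = 0" using assms(1) by (simp add: linear_sum linear_scale)
  then have "g (\<Sum>j<m. c j *\<^sub>R v j) = 0" by (rule assms(3))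
  then have "(\<Sum>j<m. c j *\<^sub>R g (v j)) = 0" using assms(2) by (simp add: linear_sum linear_scale)
  then show "c j = 0" using indep_famD[OF assms(4)] j by blast
qed

section \<open>Gram determinants\<close>

lemma bij_betw_enum_idx: "bij_betw (enum_idx :: 'a::finite \<Rightarrow> nat) UNIV {..<CARD('a)}"
proof -
  have "\<exists>f. bij_betw f (UNIV::'a set) {..<CARD('a)}"
    using ex_bij_betw_finite_nat[of "UNIV::'a set"] by (simp add: atLeast0LessThan)
  then show ?thesis unfolding enum_idx_def by (rule someI_ex)
qed

lemma enum_idx_less: "enum_idx (i::'a::finite) < CARD('a)"
  using bij_betw_enum_idx[where 'a='a] by (auto simp: bij_betw_def)

lemma inv_enum_idx: "inv (enum_idx :: 'a::finite \<Rightarrow> nat) (enum_idx i) = i"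
  using bij_betw_enum_idx[where 'a='a] by (simp add: bij_betw_def inv_f_f)

lemma enum_idx_inv: "k < CARD('a) \<Longrightarrow> enum_idx (inv (enum_idx :: 'a::finite \<Rightarrow> nat) k) = k"
  using bij_betw_enum_idx[where 'a='a] by (auto simp: bij_betw_def f_inv_into_f)

lemma sum_enum_idx_less:
  fixes g :: "nat \<Rightarrow> 'b::comm_monoid_add"
  assumes "m \<le> CARD('a::finite)"
  shows "(\<Sum>j\<in>(UNIV::'a set). if enum_idx j < m then g (enum_idx j) else 0) = (\<Sum>k<m. g k)"
proof -
  have "(\<Sum>j\<in>(UNIV::'a set). if enum_idx j < m then g (enum_idx j) else 0)
      = (\<Sum>k<CARD('a). if k < m then g k else 0)"
    using sum.reindex_bij_betw[OF bij_betw_enum_idx[where 'a='a], of "\<lambda>k. if k < m then g k else 0"]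
    by simp
  also have "\<dots> = (\<Sum>k<m. if k < m then g k else 0)"
    by (rule sum.mono_neutral_right) (use assms in auto)
  finally show ?thesis by simp
qed

lemma sum_enum_idx:
  fixes g :: "nat \<Rightarrow> 'b::comm_monoid_add"
  shows "(\<Sum>j\<in>(UNIV::'a::finite set). g (enum_idx j)) = (\<Sum>k<CARD('a). g k)"
  using sum_enum_idx_less[of "CARD('a)" g, where 'a='a] enum_idx_less[where 'a='a] by simp

lemma det_nonzero_iff_ker_trivial:
  fixes A :: "real^'n::finite^'n"
  shows "det A \<noteq> 0 \<longleftrightarrow> (\<forall>x. A *v x = 0 \<longrightarrow> x = 0)"
  by (metis invertible_det_nz invertible_def matrix_left_invertible_ker matrix_left_right_inverse)

lemma indep_fam_rows_stack_rows:
  fixes rs :: "(real^'d::finite) list"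
  assumes "det (stack_rows rs) \<noteq> 0"
  shows "indep_fam CARD('d) (\<lambda>j. rs ! j)"
  unfolding indep_fam_def
proof clarify
  fix c j assume s: "(\<Sum>j<CARD('d). c j *\<^sub>R rs ! j) = 0" and j: "j < CARD('d)"
  define x :: "real^'d" where "x = (\<chi> i. c (enum_idx i))"
  have "transpose (stack_rows rs) *v x = 0"
  proof (rule vec_eq_iff[THEN iffD2], clarify)
    fix k
    have "(transpose (stack_rows rs) *v x) $ k
        = (\<Sum>i\<in>(UNIV::'d set). (\<lambda>i. c i * rs ! i $ k) (enum_idx i))"
      by (simp add: matrix_vector_mult_def transpose_def stack_rows_def x_def mult.commute)
    also have "\<dots> = (\<Sum>i<CARD('d). c i * rs ! i $ k)" by (rule sum_enum_idx)
    also have "\<dots> = (\<Sum>i<CARD('d). c i *\<^sub>R rs ! i) $ k" by simp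
    finally show "(transpose (stack_rows rs) *v x) $ k = 0 $ k" using s by simp
  qed
  then have "x = 0" using assms det_transpose det_nonzero_iff_ker_trivial by metis
  then show "c j = 0" using j by (metis x_def enum_idx_inv vec_lambda_beta zero_index)
qed

text \<open>The Gram matrix \<open>(a i \<bullet> b j)\<^sub>i\<^sub>,\<^sub>j\<^sub><\<^sub>m\<close>, completed by an identity block to a square
  matrix indexed by the coordinates, so that its determinant can be taken in \<open>real^'d^'d\<close>.\<close>

definition gram :: "nat \<Rightarrow> (nat \<Rightarrow> real^'d::finite) \<Rightarrow> (nat \<Rightarrow> real^'d) \<Rightarrow> real^'d^'d" where
  "gram m a b = (\<chi> i j. if enum_idx i < m \<and> enum_idx j < m then a (enum_idx i) \<bullet> b (enum_idx j)
                        else if i = j then 1 else 0)"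

lemma gram_mult_component:
  fixes a b :: "nat \<Rightarrow> real^'d::finite"
  assumes "m \<le> CARD('d)"
  shows "(gram m a b *v x) $ i = (if enum_idx i < m then
           a (enum_idx i) \<bullet> (\<Sum>k<m. x $ inv enum_idx k *\<^sub>R b k) else x $ i)"
proof (cases "enum_idx i < m")
  case True
  have "(gram m a b *v x) $ i = (\<Sum>j\<in>(UNIV::'d set). if enum_idx j < m then
            (\<lambda>k. a (enum_idx i) \<bullet> b k * x $ inv enum_idx k) (enum_idx j) else 0)"
    unfolding gram_def matrix_vector_mult_def vec_lambda_beta
    by (rule sum.cong) (use True in \<open>auto simp: inv_enum_idx\<close>)
  also have "\<dots> = (\<Sum>k<m. a (enum_idx i) \<bullet> b k * x $ inv enum_idx k)"
    by (rule sum_enum_idx_less[OF assms])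
  also have "\<dots> = a (enum_idx i) \<bullet> (\<Sum>k<m. x $ inv enum_idx k *\<^sub>R b k)"
    by (simp add: inner_sum_right ac_simps)
  finally show ?thesis using True by simp
next
  case False
  have "(gram m a b *v x) $ i = (\<Sum>j\<in>UNIV. if j = i then x $ i else 0)"
    unfolding gram_def matrix_vector_mult_def vec_lambda_beta
    by (rule sum.cong[OF refl]) (use False in auto)
  then show ?thesis using False by simp
qed

lemma indep_fam_if_det_gram_nonzero:
  fixes a b :: "nat \<Rightarrow> real^'d::finite"
  assumes "det (gram m a b) \<noteq> 0" "m \<le> CARD('d)"
  shows "indep_fam m b"
  unfolding indep_fam_def
proof clarify
  fix c k assume s: "(\<Sum>j<m. c j *\<^sub>R b j) = 0" and k: "k < m"
  define x :: "real^'d" where "x = (\<chi> j. if enum_idx j < m then c (enum_idx j) else 0)"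
  have xc: "x $ inv enum_idx j = c j" if "j < m" for j
    using that assms(2) by (simp add: x_def enum_idx_inv)
  have "(\<Sum>j<m. x $ inv enum_idx j *\<^sub>R b j) = 0"
    using s by (metis (no_types, lifting) xc lessThan_iff sum.cong)
  then have "(gram m a b *v x) $ i = 0" for i
    using gram_mult_component[OF assms(2), of a b x i] by (simp add: x_def)
  then have "gram m a b *v x = 0" by (simp add: vec_eq_iff)
  then have "x = 0" using assms(1) det_nonzero_iff_ker_trivial by blast
  then show "c k = 0" using xc[OF k] by simp
qed

lemma det_gram_nonzero:
  fixes a :: "nat \<Rightarrow> real^'d::finite"
  assumes "indep_fam m a" "m \<le> CARD('d)"
  shows "det (gram m a a) \<noteq> 0"
  unfolding det_nonzero_iff_ker_trivial
proof clarify
  fix x assume gx: "gram m a a *v x = 0"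
  define S where "S = (\<Sum>k<m. x $ inv enum_idx k *\<^sub>R a k)"
  have outside: "x $ i = 0" if "\<not> enum_idx i < m" for i
    using gx that by (metis gram_mult_component[OF assms(2)] zero_index)
  have "a k \<bullet> S = 0" if "k < m" for k
    using gx gram_mult_component[OF assms(2), of a a x "inv enum_idx k"] that assms(2)
    by (simp add: S_def vec_eq_iff enum_idx_inv)
  then have "S \<bullet> S = 0" by (simp add: S_def inner_sum_left)
  then have inside: "x $ inv enum_idx k = 0" if "k < m" for k
    using indep_famD[OF assms(1), of "\<lambda>k. x $ inv enum_idx k"] that unfolding S_def by simp
  show "x = 0"
    by (metis vec_eq_iff zero_index inside outside inv_enum_idx)
qed

text \<open>Columns \<open>j < h\<close> are constant and the others affine in \<open>t\<close>, so each term of the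
  Leibniz expansion of the determinant is a product of at most \<open>m - h\<close> affine factors.\<close>

lemma poly_upto_det_gram:
  fixes a :: "nat \<Rightarrow> real^'d::finite" and b :: "nat \<Rightarrow> real^'d \<Rightarrow> real^'d"
  assumes m: "m \<le> CARD('d)"
    and const: "\<And>j t. j < h \<Longrightarrow> b j t = b j 0"
    and affine: "\<And>j y. h \<le> j \<Longrightarrow> j < m \<Longrightarrow> poly_upto 1 (\<lambda>t. y \<bullet> b j t)"
  shows "poly_upto (m - h) (\<lambda>t. det (gram m a (\<lambda>j. b j t)))"
proof -
  define deg :: "'d \<Rightarrow> nat"
    where "deg j = (if enum_idx j < m then if h \<le> enum_idx j then 1 else 0 else 0)" for j
  have entry: "poly_upto (deg j) (\<lambda>t. gram m a (\<lambda>j. b j t) $ i $ j)" for i j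
  proof (cases "enum_idx i < m \<and> enum_idx j < m \<and> h \<le> enum_idx j")
    case True
    then show ?thesis
      using affine[of "enum_idx j" "a (enum_idx i)"] by (simp add: gram_def deg_def)
  next
    case False
    then have "gram m a (\<lambda>j. b j t) $ i $ j = gram m a (\<lambda>j. b j 0) $ i $ j" for t
      using const[of "enum_idx j" t] by (auto simp: gram_def)
    then have "(\<lambda>t. gram m a (\<lambda>j. b j t) $ i $ j) = (\<lambda>t. gram m a (\<lambda>j. b j 0) $ i $ j)" ..
    then show ?thesis by (simp only: poly_upto_const)
  qed
  have "(\<Sum>j\<in>UNIV. deg j) = (\<Sum>k<m. if h \<le> k then 1 else 0::nat)"
    unfolding deg_def by (rule sum_enum_idx_less[OF m])
  also have "\<dots> = m - h" by (induction m) auto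
  finally have deg_sum: "(\<Sum>j\<in>UNIV. deg j) = m - h" .
  have "poly_upto (m - h) (\<lambda>t. \<Prod>i\<in>UNIV. gram m a (\<lambda>j. b j t) $ i $ p i)"
    if "p permutes UNIV" for p
  proof -
    have "poly_upto (\<Sum>i\<in>UNIV. deg (p i)) (\<lambda>t. \<Prod>i\<in>UNIV. gram m a (\<lambda>j. b j t) $ i $ p i)"
      by (rule poly_upto_prod) (auto intro: entry)
    moreover have "(\<Sum>i\<in>UNIV. deg (p i)) = (\<Sum>j\<in>UNIV. deg j)"
      using sum.permute[OF that, of deg] by (simp add: comp_def)
    ultimately show ?thesis using deg_sum by simp
  qed
  then show ?thesis unfolding det_def
    by (intro poly_upto_sum) (auto intro!: poly_upto_scale)
qed

text \<open>Independence is an open condition: the Gram determinant against the unperturbed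
  family is continuous in \<open>\<mu>\<close> and nonzero at \<open>\<mu> = 0\<close>.\<close>

lemma indep_fam_perturb:
  fixes a y :: "nat \<Rightarrow> real^'d::finite"
  assumes "indep_fam m a"
  obtains \<mu> where "\<mu> \<noteq> 0" "indep_fam m (\<lambda>j. a j + \<mu> *\<^sub>R y j)"
proof -
  have m: "m \<le> CARD('d)" using indep_fam_le_dim[OF assms, of UNIV] by simp
  define g where "g \<mu> = det (gram m a (\<lambda>j. a j + \<mu> *\<^sub>R y j))" for \<mu>
  have "g 0 \<noteq> 0" using det_gram_nonzero[OF assms m] by (simp add: g_def)
  have entry: "isCont (\<lambda>\<mu>. gram m a (\<lambda>j. a j + \<mu> *\<^sub>R y j) $ i $ k) 0" for i k
    by (cases "enum_idx i < m \<and> enum_idx k < m") (auto simp: gram_def intro!: continuous_intros)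
  have "isCont g 0" unfolding g_def det_def by (intro continuous_intros entry)
  then have "\<forall>\<^sub>F \<mu> in at 0. g \<mu> \<noteq> 0"
    using \<open>g 0 \<noteq> 0\<close> by (simp add: isCont_def tendsto_imp_eventually_ne)
  moreover have "\<forall>\<^sub>F \<mu> in at (0::real). \<mu> \<noteq> 0" by (simp add: eventually_at_filter)
  ultimately obtain \<mu> where "\<mu> \<noteq> 0" "g \<mu> \<noteq> 0"
    using eventually_happens'[OF at_neq_bot eventually_conj] by blast
  then show ?thesis
    using that indep_fam_if_det_gram_nonzero[OF _ m] by (auto simp: g_def)
qed

lemma poly_certificate_indep_fam:
  fixes b :: "nat \<Rightarrow> real^'d::finite \<Rightarrow> real^'d"
  assumes const: "\<And>j t. j < h \<Longrightarrow> b j t = b j 0"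
    and affine: "\<And>j y. h \<le> j \<Longrightarrow> j < m \<Longrightarrow> poly_upto 1 (\<lambda>t. y \<bullet> b j t)"
    and indep: "indep_fam m (\<lambda>j. b j t0)"
  obtains c where "\<exists>\<alpha>\<in>monomials_upto (m - h). c \<alpha> \<noteq> 0"
    and "\<And>t. poly_eval (m - h) c t \<noteq> 0 \<Longrightarrow> indep_fam m (\<lambda>j. b j t)"
proof -
  have m: "m \<le> CARD('d)" using indep_fam_le_dim[OF indep, of UNIV] by simp
  obtain c where c: "(\<lambda>t. det (gram m (\<lambda>j. b j t0) (\<lambda>j. b j t))) = poly_eval (m - h) c"
    using poly_upto_det_gram[where b=b and h=h, OF m const affine] unfolding poly_upto_def by blast
  have "poly_eval (m - h) c t0 \<noteq> 0"
    using det_gram_nonzero[OF indep m] c by metis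
  then have "\<exists>\<alpha>\<in>monomials_upto (m - h). c \<alpha> \<noteq> 0"
    by (auto simp: poly_eval_def intro: sum.neutral)
  moreover have "indep_fam m (\<lambda>j. b j t)" if "poly_eval (m - h) c t \<noteq> 0" for t
    using that c indep_fam_if_det_gram_nonzero[OF _ m] by metis
  ultimately show ?thesis using that by blast
qed

section \<open>Orthogonal projection onto the tangent space\<close>

lemma gradient_qform: "gradient (qform A) t = (A + transpose A) *v t"
proof -
  have deriv: "(qform A has_derivative (\<lambda>h. t \<bullet> (A *v h) + h \<bullet> (A *v t))) (at t)"
    unfolding qform_def
    by (rule has_derivative_inner[OF has_derivative_ident bounded_linear_imp_has_derivative])
      (rule matrix_vector_mul_bounded_linear)
  have D: "frechet_derivative (qform A) (at t) = (\<lambda>h. t \<bullet> (A *v h) + h \<bullet> (A *v t))"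
    using frechet_derivative_at[OF deriv] by simp
  show ?thesis
  proof (rule vec_eq_iff[THEN iffD2], clarify)
    fix j
    have "t \<bullet> (A *v axis j 1) = (t v* A) $ j"
      by (simp add: dot_lmul_matrix[symmetric] inner_axis)
    then show "gradient (qform A) t $ j = ((A + transpose A) *v t) $ j"
      unfolding gradient_def D
      by (simp add: matrix_vector_mult_add_rdistrib inner_axis' add.commute)
  qed
qed

text \<open>The map \<open>(x, z) \<mapsto> x + J(t)\<^sup>T z\<close>, with \<open>J(t)\<close> the Jacobian of \<open>(P\<^sub>1, \<dots>, P\<^sub>n)\<close>;
  its kernel is \<open>V(t)\<^sup>\<bottom>\<close>.\<close>

definition tangent_coord ::
    "('n::finite \<Rightarrow> real^'d::finite^'d) \<Rightarrow> real^'d \<Rightarrow> (real^'d) \<times> (real^'n) \<Rightarrow> real^'d" where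
  "tangent_coord P t v = fst v + (\<Sum>k\<in>UNIV. snd v $ k *\<^sub>R gradient (qform (P k)) t)"

lemma linear_tangent_coord: "linear (tangent_coord P t)"
  by (rule linearI) (simp_all add: tangent_coord_def algebra_simps sum.distrib scaleR_sum_right)

lemma tangent_coord_S1: "tangent_coord P t (x, 0) = x"
  by (simp add: tangent_coord_def)

lemma tangent_coord_scaleR:
  "tangent_coord P (s *\<^sub>R t) (x, z) = x + s *\<^sub>R tangent_coord P t (0, z)"
  by (simp add: tangent_coord_def gradient_qform matrix_vector_mult_scaleR scaleR_sum_right ac_simps)

lemma poly_upto_tangent_coord: "poly_upto 1 (\<lambda>t. y \<bullet> tangent_coord P t v)"
proof -
  have "linear (\<lambda>t. y \<bullet> (\<Sum>k\<in>UNIV. snd v $ k *\<^sub>R gradient (qform (P k)) t))"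
    by (rule linearI) (simp_all add: gradient_qform algebra_simps sum.distrib scaleR_sum_right
        inner_sum_right sum_distrib_left)
  then have "poly_upto 1 (\<lambda>t. y \<bullet> fst v + y \<bullet> (\<Sum>k\<in>UNIV. snd v $ k *\<^sub>R gradient (qform (P k)) t))"
    by (intro poly_upto_add poly_upto_const poly_upto_linear)
  then show ?thesis by (simp add: tangent_coord_def inner_add_right)
qed

lemma tangent_coord_eq_0_if_orthogonal:
  assumes "\<forall>w\<in>tangent_space P t. v \<bullet> w = 0"
  shows "tangent_coord P t v = 0"
proof (rule vec_eq_iff[THEN iffD2], clarify)
  fix j
  let ?g = "\<lambda>k. gradient (qform (P k)) t"
  have "v \<bullet> (axis j 1, \<chi> k. ?g k $ j) = 0"
    using assms unfolding tangent_space_def by (auto intro: span_base)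
  moreover have "v \<bullet> (axis j 1, \<chi> k. ?g k $ j) = fst v $ j + snd v \<bullet> (\<chi> k. ?g k $ j)"
    by (cases v) (simp add: inner_axis)
  moreover have "snd v \<bullet> (\<chi> k. ?g k $ j) = (\<Sum>k\<in>UNIV. snd v $ k * ?g k $ j)"
    by (simp add: inner_vec_def)
  ultimately show "tangent_coord P t v $ j = 0 $ j"
    by (simp add: tangent_coord_def)
qed

lemma orth_proj_span_eqI:
  fixes S :: "'a::euclidean_space set"
  assumes "p \<in> span S" "\<forall>w\<in>span S. (x - p) \<bullet> w = 0"
  shows "orth_proj (span S) x = p"
  unfolding orth_proj_def
proof (rule the_equality)
  fix q assume q: "q \<in> span S \<and> (\<forall>w\<in>span S. (x - q) \<bullet> w = 0)"
  have "p - q \<in> span S" using assms q by (simp add: span_diff)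
  then have "(x - q) \<bullet> (p - q) - (x - p) \<bullet> (p - q) = 0" using assms q by simp
  then have "(p - q) \<bullet> (p - q) = 0" by (simp add: algebra_simps)
  then show "q = p" by simp
qed (use assms in blast)

lemma orth_proj_span:
  fixes S :: "'a::euclidean_space set"
  shows "orth_proj (span S) x \<in> span S \<and> (\<forall>w\<in>span S. (x - orth_proj (span S) x) \<bullet> w = 0)"
proof -
  obtain y z where "y \<in> span S" "\<And>w. w \<in> span S \<Longrightarrow> orthogonal z w" "x = y + z"
    using orthogonal_subspace_decomp_exists by blast
  then have "y \<in> span S \<and> (\<forall>w\<in>span S. (x - y) \<bullet> w = 0)" by (auto simp: orthogonal_def)
  then show ?thesis using orth_proj_span_eqI by metis
qed

lemma linear_orth_proj_span:
  fixes S :: "'a::euclidean_space set"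
  shows "linear (orth_proj (span S))"
proof (rule linearI)
  fix x y
  show "orth_proj (span S) (x + y) = orth_proj (span S) x + orth_proj (span S) y"
    using orth_proj_span[of S x] orth_proj_span[of S y]
    by (intro orth_proj_span_eqI) (auto simp: span_add algebra_simps)
next
  fix c x
  show "orth_proj (span S) (c *\<^sub>R x) = c *\<^sub>R orth_proj (span S) x"
    using orth_proj_span[of S x]
    by (intro orth_proj_span_eqI)
      (auto simp: span_mul simp flip: scaleR_right_diff_distrib)
qed

lemma dim_orth_proj_tangent_space_ge:
  fixes P :: "'n::finite \<Rightarrow> real^'d::finite^'d" and V :: "((real^'d) \<times> (real^'n)) set"
  assumes "indep_fam m (\<lambda>j. tangent_coord P t (v j))" "\<And>j. j < m \<Longrightarrow> v j \<in> V"
  shows "m \<le> dim (orth_proj (tangent_space P t) ` V)"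
proof -
  have "tangent_coord P t u = 0" if "orth_proj (tangent_space P t) u = 0" for u
  proof (rule tangent_coord_eq_0_if_orthogonal)
    show "\<forall>w\<in>tangent_space P t. u \<bullet> w = 0"
      using that orth_proj_span[of "{(axis j 1, \<chi> k. gradient (qform (P k)) t $ j) | j. True}" u]
      unfolding tangent_space_def by simp
  qed
  then have "indep_fam m (\<lambda>j. orth_proj (tangent_space P t) (v j))"
    using indep_fam_of_kernel_subset[OF _ linear_tangent_coord _ assms(1)] linear_orth_proj_span
    unfolding tangent_space_def by blast
  then show ?thesis by (rule indep_fam_le_dim) (use assms(2) in auto)
qed

section \<open>A point where the projected family is independent\<close>

lemma mem_S1_iff: "v \<in> S1 \<longleftrightarrow> snd v = 0"
  by (cases v) (auto simp: S1_def)

lemma subspace_S1: "subspace (S1 :: ((real^'d::finite) \<times> (real^'n::finite)) set)"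
  unfolding subspace_def by (auto simp: mem_S1_iff)

text \<open>The orthogonal complement of \<open>V \<inter> S\<^sub>1\<close> in \<open>V\<close> meets \<open>S\<^sub>1 = ker snd\<close> trivially.\<close>

lemma dim_snd_image_ge:
  fixes V :: "((real^'d::finite) \<times> (real^'n::finite)) set"
  assumes V: "subspace V"
  shows "dim V - dim (V \<inter> S1) \<le> dim (snd ` V)"
proof -
  let ?K = "V \<inter> S1"
  let ?W = "{y \<in> V. \<forall>x \<in> ?K. orthogonal x y}"
  have "dim ?W + dim ?K = dim V"
    by (rule dim_subspace_orthogonal_to_vectors) (use V subspace_S1 subspace_inter in auto)
  have sW: "subspace ?W"
    using subspace_inter[OF V subspace_orthogonal_to_vectors[of ?K]] by (simp add: Int_def)
  have "inj_on snd ?W"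
  proof (rule inj_onI)
    fix y y' assume yy: "y \<in> ?W" "y' \<in> ?W" "snd y = snd y'"
    then have "y - y' \<in> ?W" "y - y' \<in> S1"
      using subspace_diff[OF sW] by (auto simp: mem_S1_iff)
    then have "orthogonal (y - y') (y - y')" by blast
    then show "y = y'" by (simp add: orthogonal_def)
  qed
  then have "inj_on snd (span ?W)" by (simp add: span_eq_iff[THEN iffD2, OF sW])
  then have "dim (snd ` ?W) = dim ?W" by (rule dim_image_eq[OF linear_snd])
  moreover have "dim (snd ` ?W) \<le> dim (snd ` V)" by (rule dim_subset) auto
  ultimately show ?thesis using \<open>dim ?W + dim ?K = dim V\<close> by linarith
qed

lemma extend_indep_fam_to_list:
  fixes e :: "nat \<Rightarrow> real^'d::finite"
  assumes "indep_fam h e" "h \<le> q" "q \<le> CARD('d)"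
  obtains ws where "length ws = q" "distinct ws" "independent (set ws)"
    "\<And>i. i < h \<Longrightarrow> ws ! i = e i"
proof -
  let ?E = "e ` {..<h}"
  have injE: "inj_on e {..<h}" by (rule indep_fam_inj_on[OF assms(1)])
  obtain B where B: "?E \<subseteq> B" "independent B" "UNIV \<subseteq> span B"
    using maximal_independent_subset_extend[of ?E UNIV] indep_fam_independent[OF assms(1)] by auto
  have finB: "finite B" using B(2) by (rule finiteI_independent)
  have "card B = CARD('d)" using basis_card_eq_dim[of B UNIV] B by simp
  then have "card (B - ?E) = CARD('d) - h"
    using B(1) finB injE by (simp add: card_Diff_subset card_image finite_subset)
  then have "q - h \<le> card (B - ?E)" using assms(3) by simp
  then obtain F where F: "F \<subseteq> B - ?E" "card F = q - h" "finite F"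
    by (rule obtain_subset_with_card_n)
  obtain fl where fl: "set fl = F" "distinct fl" using finite_distinct_list[OF F(3)] by auto
  let ?ws = "map e [0..<h] @ fl"
  show ?thesis
  proof (rule that[of ?ws])
    show "length ?ws = q" using fl F assms(2) distinct_card[OF fl(2)] by simp
    show "distinct ?ws" using fl F injE by (auto simp: distinct_map atLeast0LessThan lessThan_def)
    have "set ?ws \<subseteq> B" using fl F B by auto
    then show "independent (set ?ws)" using B(2) independent_mono by blast
    show "?ws ! i = e i" if "i < h" for i using that by (simp add: nth_append)
  qed
qed

lemma sum_lessThan_add: "(\<Sum>j<a + (b::nat). f j) = (\<Sum>j<a. f j) + (\<Sum>l<b. f (a + l))"
  by (induction b) (simp_all add: add.assoc)

lemma grad_list_nth:
  "k < CARD('n) \<Longrightarrow> grad_list P t ! k = gradient (qform (P (inv (enum_idx :: 'n::finite \<Rightarrow> nat) k))) t"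
  by (simp add: grad_list_def)

lemma length_grad_list: "length (grad_list (P :: 'n::finite \<Rightarrow> _) t) = CARD('n)"
  by (simp add: grad_list_def)

lemma indep_fam_grad_list_append:
  fixes P :: "'n::finite \<Rightarrow> real^'d::finite^'d" and e :: "nat \<Rightarrow> real^'d"
  assumes indep: "indep_fam CARD('d) (\<lambda>j. (grad_list P t @ ws) ! j)"
    and ws: "\<And>i. i < h \<Longrightarrow> ws ! i = e i"
    and h: "h \<le> CARD('d) - CARD('n)" and nd: "CARD('n) \<le> CARD('d)"
    and s: "(\<Sum>i<h. a i *\<^sub>R e i) + (\<Sum>k\<in>UNIV. \<beta> k *\<^sub>R gradient (qform (P k)) t) = 0"
  shows "(\<forall>i<h. a i = 0) \<and> (\<forall>k. \<beta> k = 0)"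
proof -
  let ?n = "CARD('n)" and ?d = "CARD('d)"
  let ?rs = "grad_list P t @ ws" and ?g = "\<lambda>k. gradient (qform (P k)) t"
  define c where
    "c j = (if j < ?n then \<beta> (inv enum_idx j) else if j < ?n + h then a (j - ?n) else 0)" for j
  have "(\<Sum>j<?d. c j *\<^sub>R ?rs ! j)
      = (\<Sum>j<?n. c j *\<^sub>R ?rs ! j) + (\<Sum>l<?d - ?n. c (?n + l) *\<^sub>R ?rs ! (?n + l))"
    using sum_lessThan_add[where a = ?n and b = "?d - ?n"] nd by simp
  also have "(\<Sum>j<?n. c j *\<^sub>R ?rs ! j) = (\<Sum>j<?n. \<beta> (inv enum_idx j) *\<^sub>R ?g (inv enum_idx j))"
    by (rule sum.cong) (simp_all add: c_def nth_append length_grad_list grad_list_nth)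
  also have "\<dots> = (\<Sum>k\<in>(UNIV::'n set). (\<lambda>j. \<beta> (inv enum_idx j) *\<^sub>R ?g (inv enum_idx j)) (enum_idx k))"
    by (rule sum_enum_idx[symmetric])
  also have "\<dots> = (\<Sum>k\<in>UNIV. \<beta> k *\<^sub>R ?g k)" by (simp add: inv_enum_idx)
  also have "(\<Sum>l<?d - ?n. c (?n + l) *\<^sub>R ?rs ! (?n + l))
      = (\<Sum>l<?d - ?n. if l < h then a l *\<^sub>R e l else 0)"
    by (rule sum.cong) (simp_all add: c_def nth_append length_grad_list ws)
  also have "\<dots> = (\<Sum>l<h. if l < h then a l *\<^sub>R e l else 0)"
    by (rule sum.mono_neutral_right) (use h in auto)
  finally have "(\<Sum>j<?d. c j *\<^sub>R ?rs ! j) = 0" using s by (simp add: add.commute)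
  then have c0: "c j = 0" if "j < ?d" for j using indep_famD[OF indep, of c] that by blast
  show ?thesis
  proof safe
    fix i assume "i < h" then show "a i = 0" using c0[of "?n + i"] h by (simp add: c_def)
  next
    fix k :: 'n
    show "\<beta> k = 0"
      using c0[of "enum_idx k"] enum_idx_less[of k] nd by (simp add: c_def inv_enum_idx)
  qed
qed

lemma exists_point_grads_independent:
  fixes P :: "'n::finite \<Rightarrow> real^'d::finite^'d" and e :: "nat \<Rightarrow> real^'d"
  assumes nd: "CARD('n) \<le> CARD('d)"
    and nondeg: "\<And>ws. length ws = CARD('d) - CARD('n) \<Longrightarrow> distinct ws \<Longrightarrow> independent (set ws)
                  \<Longrightarrow> \<exists>t. det (stack_rows (grad_list P t @ ws)) \<noteq> 0"
    and e: "indep_fam h e" "h \<le> CARD('d) - CARD('n)"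
  obtains t where "\<And>a \<beta>. (\<Sum>i<h. a i *\<^sub>R e i) + (\<Sum>k\<in>UNIV. \<beta> k *\<^sub>R gradient (qform (P k)) t) = 0
    \<Longrightarrow> (\<forall>i<h. a i = 0) \<and> (\<forall>k. \<beta> k = 0)"
proof -
  obtain ws where ws: "length ws = CARD('d) - CARD('n)" "distinct ws" "independent (set ws)"
      "\<And>i. i < h \<Longrightarrow> ws ! i = e i"
    using extend_indep_fam_to_list[OF e] by auto
  obtain t where "det (stack_rows (grad_list P t @ ws)) \<noteq> 0" using nondeg[OF ws(1-3)] by blast
  then have "indep_fam CARD('d) (\<lambda>j. (grad_list P t @ ws) ! j)"
    by (rule indep_fam_rows_stack_rows)
  then show ?thesis using that indep_fam_grad_list_append[OF _ ws(4) e(2) nd] by blast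
qed

lemma indep_fam_append_combinations:
  fixes e :: "nat \<Rightarrow> 'a::real_vector" and g :: "'n::finite \<Rightarrow> 'a" and z :: "nat \<Rightarrow> real^'n"
  assumes eg: "\<And>a \<beta>. (\<Sum>i<h. a i *\<^sub>R e i) + (\<Sum>k\<in>UNIV. \<beta> k *\<^sub>R g k) = 0
      \<Longrightarrow> (\<forall>i<h. a i = 0) \<and> (\<forall>k. \<beta> k = 0)"
    and z: "indep_fam l z"
  shows "indep_fam (h + l) (\<lambda>j. if j < h then e j else (\<Sum>k\<in>UNIV. z (j - h) $ k *\<^sub>R g k))"
  unfolding indep_fam_def
proof clarify
  fix c j
  let ?v = "\<lambda>j. if j < h then e j else (\<Sum>k\<in>UNIV. z (j - h) $ k *\<^sub>R g k)"
  assume s: "(\<Sum>j<h + l. c j *\<^sub>R ?v j) = 0" and j: "j < h + l"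
  have "(\<Sum>j<h + l. c j *\<^sub>R ?v j)
      = (\<Sum>i<h. c i *\<^sub>R e i) + (\<Sum>i<l. \<Sum>k\<in>UNIV. (c (h + i) * z i $ k) *\<^sub>R g k)"
    by (simp add: sum_lessThan_add scaleR_sum_right)
  also have "(\<Sum>i<l. \<Sum>k\<in>UNIV. (c (h + i) * z i $ k) *\<^sub>R g k)
      = (\<Sum>k\<in>UNIV. (\<Sum>i<l. c (h + i) * z i $ k) *\<^sub>R g k)"
    by (subst sum.swap) (simp add: scaleR_sum_left)
  finally have "(\<forall>i<h. c i = 0) \<and> (\<forall>k. (\<Sum>i<l. c (h + i) * z i $ k) = 0)"
    using s by (intro eg) simp
  moreover have "c (h + i) = 0" if "\<forall>k. (\<Sum>i<l. c (h + i) * z i $ k) = 0" "i < l" for i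
    using that indep_famD[OF z, of "\<lambda>i. c (h + i)" i] by (simp add: vec_eq_iff)
  ultimately show "c j = 0"
    using j by (cases "j < h") (auto, metis add_diff_inverse_nat nat_add_left_cancel_less)
qed

lemma exists_leading_family:
  fixes P :: "'n::finite \<Rightarrow> real^'d::finite^'d" and V :: "((real^'d) \<times> (real^'n)) set"
  assumes nd: "CARD('n) \<le> CARD('d)"
    and nondeg: "\<And>ws. length ws = CARD('d) - CARD('n) \<Longrightarrow> distinct ws \<Longrightarrow> independent (set ws)
                  \<Longrightarrow> \<exists>t. det (stack_rows (grad_list P t @ ws)) \<noteq> 0"
    and V: "subspace V"
    and H1: "H1 \<le> dim (V \<inter> S1)" "H1 \<le> CARD('d) - CARD('n)"
    and H2: "H2 \<le> dim V - dim (V \<inter> S1)"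
  obtains vv t1 where "\<And>j. j < H1 + H2 \<Longrightarrow> vv j \<in> V" "\<And>j. j < H1 \<Longrightarrow> snd (vv j) = 0"
    "indep_fam (H1 + H2) (\<lambda>j. if j < H1 then fst (vv j) else tangent_coord P t1 (0, snd (vv j)))"
proof -
  obtain e where eS: "\<And>j. j < H1 \<Longrightarrow> e j \<in> V \<inter> S1" and ei: "indep_fam H1 e"
    using obtain_indep_fam_in[OF H1(1)] by blast
  have "indep_fam H1 (\<lambda>j. (fst (e j), 0 :: real^'n))"
    using ei eS by (subst indep_fam_cong[of _ _ e]) (auto simp: mem_S1_iff prod_eq_iff)
  then have "indep_fam H1 (\<lambda>j. fst (e j))"
    by (rule indep_fam_of_kernel_subset[OF linear_fst, rotated -1])
      (auto simp: linear_iff zero_prod_def)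
  then obtain t1 where t1: "\<And>a \<beta>. (\<Sum>i<H1. a i *\<^sub>R fst (e i))
      + (\<Sum>k\<in>UNIV. \<beta> k *\<^sub>R gradient (qform (P k)) t1) = 0 \<Longrightarrow> (\<forall>i<H1. a i = 0) \<and> (\<forall>k. \<beta> k = 0)"
    using exists_point_grads_independent[OF nd nondeg _ H1(2)] by blast
  have "H2 \<le> dim (snd ` V)" using H2 dim_snd_image_ge[OF V] by linarith
  then obtain z where zV: "\<And>j. j < H2 \<Longrightarrow> z j \<in> snd ` V" and zi: "indep_fam H2 z"
    using obtain_indep_fam_in by blast
  have "\<forall>j. \<exists>x. j < H2 \<longrightarrow> (x, z j) \<in> V" using zV by force
  then obtain x where xV: "\<And>j. j < H2 \<Longrightarrow> (x j, z j) \<in> V" by metis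
  define vv where "vv j = (if j < H1 then e j else (x (j - H1), z (j - H1)))" for j
  show ?thesis
  proof (rule that[of vv t1])
    show "vv j \<in> V" if "j < H1 + H2" for j using that eS xV by (simp add: vv_def)
    show "snd (vv j) = 0" if "j < H1" for j using that eS by (simp add: vv_def mem_S1_iff)
    have lead_eq: "(if j < H1 then fst (vv j) else tangent_coord P t1 (0, snd (vv j)))
        = (if j < H1 then fst (e j) else (\<Sum>k\<in>UNIV. z (j - H1) $ k *\<^sub>R gradient (qform (P k)) t1))"
      for j by (simp add: vv_def tangent_coord_def)
    show "indep_fam (H1 + H2)
        (\<lambda>j. if j < H1 then fst (vv j) else tangent_coord P t1 (0, snd (vv j)))"
      unfolding lead_eq by (rule indep_fam_append_combinations[OF t1 zi])
  qed
qed

text \<open>Along the ray \<open>t = t\<^sub>1 / \<mu>\<close> the family is, up to rescaling, a perturbation of order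
  \<open>\<mu>\<close> of the leading family, which is independent.\<close>

lemma exists_point_indep_tangent_coord:
  fixes vv :: "nat \<Rightarrow> (real^'d::finite) \<times> (real^'n::finite)"
  assumes S1: "\<And>j. j < h \<Longrightarrow> snd (vv j) = 0"
    and lead: "indep_fam m (\<lambda>j. if j < h then fst (vv j) else tangent_coord P t1 (0, snd (vv j)))"
  obtains t0 where "indep_fam m (\<lambda>j. tangent_coord P t0 (vv j))"
proof -
  define lead where
    "lead j = (if j < h then fst (vv j) else tangent_coord P t1 (0, snd (vv j)))" for j
  obtain \<mu> where \<mu>: "\<mu> \<noteq> 0"
    and perturbed: "indep_fam m (\<lambda>j. lead j + \<mu> *\<^sub>R (if j < h then 0 else fst (vv j)))"
    using indep_fam_perturb[of m lead "\<lambda>j. if j < h then 0 else fst (vv j)"] lead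
    unfolding lead_def by blast
  have scaled: "indep_fam m (\<lambda>j. (if j < h then 1 else 1 / \<mu>) *\<^sub>R
      (lead j + \<mu> *\<^sub>R (if j < h then 0 else fst (vv j))))"
    using indep_fam_scaleR[OF perturbed] \<mu> by simp
  have ray: "tangent_coord P ((1 / \<mu>) *\<^sub>R t1) (vv j)
      = (if j < h then 1 else 1 / \<mu>) *\<^sub>R (lead j + \<mu> *\<^sub>R (if j < h then 0 else fst (vv j)))"
    if "j < m" for j
  proof -
    have "tangent_coord P ((1 / \<mu>) *\<^sub>R t1) (vv j)
        = fst (vv j) + (1 / \<mu>) *\<^sub>R tangent_coord P t1 (0, snd (vv j))"
      using tangent_coord_scaleR[of P "1 / \<mu>" t1 "fst (vv j)" "snd (vv j)"] by simp
    moreover have "tangent_coord P t1 (0, 0) = 0" by (simp add: tangent_coord_def)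
    ultimately show ?thesis
      using \<mu> S1[of j] by (cases "j < h") (simp_all add: lead_def scaleR_add_right)
  qed
  show ?thesis
    by (rule that[of "(1 / \<mu>) *\<^sub>R t1"]) (use scaled in \<open>simp add: indep_fam_cong[OF ray]\<close>)
qed

theorem mainTheorem16:
  fixes P :: "'n::finite \<Rightarrow> real^'d::finite^'d"
    and V :: "((real^'d) \<times> (real^'n)) set"
    and H1 H2 :: nat
  assumes "CARD('n) \<le> CARD('d)"
    and nondeg: "\<And>ws. length ws = CARD('d) - CARD('n) \<Longrightarrow> distinct ws \<Longrightarrow> independent (set ws)
                  \<Longrightarrow> \<exists>t. det (stack_rows (grad_list P t @ ws)) \<noteq> 0"
    and "subspace V"
    and "H1 \<le> min (dim (V \<inter> S1)) (CARD('d) - CARD('n))"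
    and "H2 \<le> dim V - dim (V \<inter> S1)"
  shows "\<exists>c. (\<exists>\<alpha>\<in>monomials_upto H2. c \<alpha> \<noteq> 0) \<and>
           (\<forall>t. poly_eval H2 c t \<noteq> 0 \<longrightarrow>
                H1 + H2 \<le> dim (orth_proj (tangent_space P t) ` V))"
proof -
  have H1: "H1 \<le> dim (V \<inter> S1)" "H1 \<le> CARD('d) - CARD('n)" using assms(4) by auto
  obtain vv t1 where vvV: "\<And>j. j < H1 + H2 \<Longrightarrow> vv j \<in> V"
    and vvS1: "\<And>j. j < H1 \<Longrightarrow> snd (vv j) = 0"
    and lead: "indep_fam (H1 + H2)
      (\<lambda>j. if j < H1 then fst (vv j) else tangent_coord P t1 (0, snd (vv j)))"
    using exists_leading_family[OF assms(1) nondeg assms(3) H1 assms(5)] by blast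
  obtain t0 where "indep_fam (H1 + H2) (\<lambda>j. tangent_coord P t0 (vv j))"
    using exists_point_indep_tangent_coord[OF vvS1 lead] by blast
  moreover have "tangent_coord P t (vv j) = tangent_coord P 0 (vv j)" if "j < H1" for j t
    using vvS1[OF that] by (cases "vv j") (simp add: tangent_coord_S1)
  ultimately obtain c where nonzero: "\<exists>\<alpha>\<in>monomials_upto (H1 + H2 - H1). c \<alpha> \<noteq> 0"
    and indep: "\<And>t. poly_eval (H1 + H2 - H1) c t \<noteq> 0
      \<Longrightarrow> indep_fam (H1 + H2) (\<lambda>j. tangent_coord P t (vv j))"
    using poly_certificate_indep_fam[where b = "\<lambda>j t. tangent_coord P t (vv j)" and h = H1
        and m = "H1 + H2", OF _ poly_upto_tangent_coord] by blast
  have "H1 + H2 \<le> dim (orth_proj (tangent_space P t) ` V)" if "poly_eval H2 c t \<noteq> 0" for t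
    using dim_orth_proj_tangent_space_ge[OF indep vvV] that by simp
  then show ?thesis using nonzero by auto
qed

end
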